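(* Let $S$ and $T$ be finite sets and let $L:\{0,1\}^S\to\{0,1\}$ be a monotone Boolean function. Let $\psi:S\to T$ be a function such that $$|\psi(A)|=|A|\quad\text{for every minimal one-set } A \text{ of } L.$$ Let $X=(X(i))_{i\in S}$ and $Y=(Y(j))_{j\in T}$ be i.i.d. collections of Boolean random variables with intensity $p\in[0,1]$. Then $$\mathbb P[L(Y\circ\psi)=1]\leq \mathbb P[L(X)=1].$$ Similarly, if $|\psi(Z)|=|Z|$ for every minimal zero-set $Z$ of $L$, then $\mathbb P[L(Y\circ\psi)=1]\geq \mathbb P[L(X)=1]$.
   Context: - $L$ is monotone if $x\leq y$ pointwise implies $L(x)\leq L(y)$. - A one-set of $L$ is a set $A\subset S$ with $L(1_A)=1$; a zero-set is a set $Z\subset S$ with $L(1-1_Z)=0$. A one-set (zero-set) is minimal if it contains no other one-set (zero-set) as a proper subset. - "I.i.d. with intensity $p$" means independent with $\mathbb P[X(i)=1]=p$. - $(Y\circ\psi)(i)=Y(\psi(i))$ for $i\in S$. *)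

theory Defs
  imports "HOL-Probability.Probability"
begin

text \<open>Boolean functions L on {0,1}^S are modelled as predicates on S-configurations
  'a \<Rightarrow> bool with S the (finite) universe of type 'a; 1 = True, 0 = False.\<close>

definition one_set :: "(('a \<Rightarrow> bool) \<Rightarrow> bool) \<Rightarrow> 'a set \<Rightarrow> bool" where
  "one_set L A \<longleftrightarrow> L (\<lambda>i. i \<in> A)"

definition zero_set :: "(('a \<Rightarrow> bool) \<Rightarrow> bool) \<Rightarrow> 'a set \<Rightarrow> bool" where
  "zero_set L Z \<longleftrightarrow> \<not> L (\<lambda>i. i \<notin> Z)"

definition minimal_one_set :: "(('a \<Rightarrow> bool) \<Rightarrow> bool) \<Rightarrow> 'a set \<Rightarrow> bool" where
  "minimal_one_set L A \<longleftrightarrow> one_set L A \<and> (\<forall>B. B \<subset> A \<longrightarrow> \<not> one_set L B)"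

definition minimal_zero_set :: "(('a \<Rightarrow> bool) \<Rightarrow> bool) \<Rightarrow> 'a set \<Rightarrow> bool" where
  "minimal_zero_set L Z \<longleftrightarrow> zero_set L Z \<and> (\<forall>B. B \<subset> Z \<longrightarrow> \<not> zero_set L B)"

definition iid_bernoulli :: "real \<Rightarrow> ('a::finite \<Rightarrow> bool) pmf" where
  "iid_bernoulli p = Pi_pmf UNIV False (\<lambda>_. bernoulli_pmf p)"

end

theory Submission
  imports Defs
begin

text \<open>
  Merging two coordinates u, v of an i.i.d. configuration, Z \<mapsto> Z(v := Z u), changes the
  probability of an event F by p(1 - p) times the expectation, over the other coordinates, of
  F(1,1) + F(0,0) - F(1,0) - F(0,1). So merging can only lower the probability when F is
  submodular in (u, v); for F Z = L (Z \<circ> \<phi>) with L monotone this holds as soon as no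
  minimal one-set of L meets both fibres \<phi> -` {u} and \<phi> -` {v}.
  On the index set S + T, \<psi> is reached from the identity by merging, one point x at a time,
  the coordinate of x into that of \<psi> x; injectivity of \<psi> on minimal one-sets keeps the two
  fibres apart at every step. The statement for zero-sets is the one for one-sets applied to
  the dual function x \<mapsto> \<not> L (\<not> x) at intensity 1 - p.
\<close>

lemma ex_minimal_one_set_le:
  fixes L :: "('a::finite \<Rightarrow> bool) \<Rightarrow> bool"
  assumes "L x"
  shows "\<exists>A. minimal_one_set L A \<and> A \<subseteq> {i. x i}"
proof -
  define C where "C = {A. one_set L A \<and> A \<subseteq> {i. x i}}"
  have "finite C"
    by (rule finite_subset[of _ UNIV]) simp_all
  moreover have "{i. x i} \<in> C"
    using assms by (simp add: C_def one_set_def)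
  ultimately obtain A
    where A: "A \<in> C" and min: "\<forall>B\<in>C. B \<subseteq> A \<longrightarrow> A = B"
    using finite_has_minimal2 by blast
  have "minimal_one_set L A"
    unfolding minimal_one_set_def
  proof (intro conjI allI impI notI)
    show "one_set L A"
      using A by (simp add: C_def)
  next
    fix B
    assume "B \<subset> A" "one_set L B"
    then have "B \<in> C"
      using A by (auto simp: C_def)
    then show False
      using min \<open>B \<subset> A\<close> by auto
  qed
  then show ?thesis
    using A by (auto simp: C_def)
qed

definition boolean_dual :: "(('a \<Rightarrow> bool) \<Rightarrow> bool) \<Rightarrow> ('a \<Rightarrow> bool) \<Rightarrow> bool" where
  "boolean_dual L x \<longleftrightarrow> \<not> L (Not \<circ> x)"

lemma mono_boolean_dual:
  assumes "mono L"
  shows "mono (boolean_dual L)"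
proof (rule monoI)
  fix x y :: "'a \<Rightarrow> bool"
  assume "x \<le> y"
  then have "L (Not \<circ> y) \<le> L (Not \<circ> x)"
    by (intro monoD[OF assms]) (auto simp: le_fun_def)
  then show "boolean_dual L x \<le> boolean_dual L y"
    by (auto simp: boolean_dual_def)
qed

lemma minimal_zero_set_iff_minimal_one_set_boolean_dual:
  "minimal_zero_set L Z \<longleftrightarrow> minimal_one_set (boolean_dual L) Z"
  by (simp add: minimal_zero_set_def minimal_one_set_def zero_set_def one_set_def
      boolean_dual_def comp_def)

definition submodular_in :: "(('a \<Rightarrow> bool) \<Rightarrow> bool) \<Rightarrow> 'a \<Rightarrow> 'a \<Rightarrow> bool" where
  "submodular_in F u v \<longleftrightarrow>
     (\<forall>g. of_bool (F (g(u := True, v := True))) + of_bool (F (g(u := False, v := False)))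
        \<le> (of_bool (F (g(u := True, v := False))) + of_bool (F (g(u := False, v := True))) :: real))"

lemma submodular_in_if_mono:
  assumes "mono F"
    and "\<And>g. F (g(u := True, v := True)) \<Longrightarrow>
      F (g(u := True, v := False)) \<or> F (g(u := False, v := True))"
  shows "submodular_in F u v"
  unfolding submodular_in_def
proof
  fix g
  have upd_mono: "F (g(u := a', v := b'))"
    if "F (g(u := a, v := b))" "a \<le> a'" "b \<le> b'" for a b a' b'
    using monoD[OF assms(1), of "g(u := a, v := b)" "g(u := a', v := b')"] that
    by (auto simp: le_fun_def)
  show "of_bool (F (g(u := True, v := True))) + of_bool (F (g(u := False, v := False)))
      \<le> (of_bool (F (g(u := True, v := False))) + of_bool (F (g(u := False, v := True))) :: real)"
    using assms(2)[of g] upd_mono[of False False True False] upd_mono[of False False False True]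
    by auto
qed

lemma submodular_in_comp_if_minimal_one_sets_avoid:
  fixes L :: "('s::finite \<Rightarrow> bool) \<Rightarrow> bool" and \<phi> :: "'s \<Rightarrow> 'u"
  assumes "mono L" and "u \<noteq> v"
    and avoid: "\<And>A. minimal_one_set L A \<Longrightarrow> u \<notin> \<phi> ` A \<or> v \<notin> \<phi> ` A"
  shows "submodular_in (\<lambda>Z. L (Z \<circ> \<phi>)) u v"
proof (rule submodular_in_if_mono)
  show "mono (\<lambda>Z. L (Z \<circ> \<phi>))"
  proof (rule monoI)
    fix Z Z' :: "'u \<Rightarrow> bool"
    assume "Z \<le> Z'"
    then have "Z \<circ> \<phi> \<le> Z' \<circ> \<phi>"
      by (simp add: le_fun_def)
    then show "L (Z \<circ> \<phi>) \<le> L (Z' \<circ> \<phi>)"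
      by (rule monoD[OF assms(1)])
  qed
next
  fix g :: "'u \<Rightarrow> bool"
  assume "L (g(u := True, v := True) \<circ> \<phi>)"
  from ex_minimal_one_set_le[of L, OF this] obtain A
    where A: "minimal_one_set L A" "A \<subseteq> {k. (g(u := True, v := True) \<circ> \<phi>) k}"
    by blast
  have holds_above_A: "L x" if "A \<subseteq> {k. x k}" for x
  proof -
    have "L (\<lambda>k. k \<in> A) \<le> L x"
      using that by (intro monoD[OF assms(1)]) (auto simp: le_fun_def)
    then show "L x"
      using A(1) by (simp add: minimal_one_set_def one_set_def le_bool_def)
  qed
  from avoid[OF A(1)]
  show "L (g(u := True, v := False) \<circ> \<phi>) \<or> L (g(u := False, v := True) \<circ> \<phi>)"
  proof
    assume "u \<notin> \<phi> ` A"
    then have "A \<subseteq> {k. (g(u := False, v := True) \<circ> \<phi>) k}"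
      using A(2) by auto
    then show ?thesis
      using holds_above_A by blast
  next
    assume "v \<notin> \<phi> ` A"
    then have "A \<subseteq> {k. (g(u := True, v := False) \<circ> \<phi>) k}"
      using A(2) \<open>u \<noteq> v\<close> by auto
    then show ?thesis
      using holds_above_A by blast
  qed
qed

lemma map_pmf_Not_bernoulli_pmf:
  assumes "0 \<le> p" "p \<le> 1"
  shows "map_pmf Not (bernoulli_pmf p) = bernoulli_pmf (1 - p)"
proof (rule pmf_eqI)
  fix b :: bool
  from assms show "pmf (map_pmf Not (bernoulli_pmf p)) b = pmf (bernoulli_pmf (1 - p)) b"
    using pmf_map_inj'[of Not "bernoulli_pmf p" "\<not> b"] by (cases b) (auto simp: inj_def)
qed

lemma map_pmf_Not_iid_bernoulli:
  assumes "0 \<le> p" "p \<le> 1"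
  shows "map_pmf (\<lambda>Z. Not \<circ> Z) (iid_bernoulli p)
       = (iid_bernoulli (1 - p) :: ('a::finite \<Rightarrow> bool) pmf)"
proof -
  have "iid_bernoulli (1 - p)
      = Pi_pmf (UNIV :: 'a set) False (\<lambda>_. map_pmf Not (bernoulli_pmf p))"
    using assms by (simp add: iid_bernoulli_def map_pmf_Not_bernoulli_pmf)
  also have "\<dots> = map_pmf (\<lambda>Z. Not \<circ> Z) (Pi_pmf UNIV True (\<lambda>_. bernoulli_pmf p))"
    by (rule Pi_pmf_map) auto
  also have "Pi_pmf (UNIV :: 'a set) True (\<lambda>_. bernoulli_pmf p) = iid_bernoulli p"
    using Pi_pmf_default_swap[of "UNIV :: 'a set" True False "\<lambda>_. bernoulli_pmf p"]
    by (simp add: iid_bernoulli_def)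
  finally show ?thesis ..
qed

lemma prob_iid_bernoulli_flip:
  fixes G :: "('a::finite \<Rightarrow> bool) \<Rightarrow> bool"
  assumes "0 \<le> p" "p \<le> 1"
  shows "measure_pmf.prob (iid_bernoulli (1 - p)) {Z. \<not> G (Not \<circ> Z)}
       = 1 - measure_pmf.prob (iid_bernoulli p) {Z. G Z}"
proof -
  have "measure_pmf.prob (iid_bernoulli (1 - p)) {Z. \<not> G (Not \<circ> Z)}
      = measure_pmf.prob (iid_bernoulli p) (UNIV - {Z. G Z})"
    by (simp flip: map_pmf_Not_iid_bernoulli[OF assms] add: comp_def set_diff_eq)
  then show ?thesis
    using measure_pmf.prob_compl[of "{Z. G Z}" "iid_bernoulli p"] by simp
qed

lemma map_pmf_comp_inj_iid_bernoulli:
  fixes h :: "'a::finite \<Rightarrow> 'b::finite"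
  assumes "inj h"
  shows "map_pmf (\<lambda>Z. Z \<circ> h) (iid_bernoulli p) = iid_bernoulli p"
proof -
  let ?B = "bernoulli_pmf p"
  have "iid_bernoulli p = map_pmf (\<lambda>Z. Z \<circ> h) (Pi_pmf (range h) False (\<lambda>_. ?B))"
    unfolding iid_bernoulli_def
    by (rule Pi_pmf_bij_betw) (use assms in \<open>auto simp: bij_betw_def\<close>)
  also have "Pi_pmf (range h) False (\<lambda>_. ?B)
      = map_pmf (\<lambda>Z x. if x \<in> range h then Z x else False) (iid_bernoulli p)"
    unfolding iid_bernoulli_def by (rule Pi_pmf_subset) auto
  finally show ?thesis
    by (simp add: pmf.map_comp comp_def)
qed

lemma prob_iid_bernoulli_comp_inj:
  fixes h :: "'a::finite \<Rightarrow> 'b::finite"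
  assumes "inj h"
  shows "measure_pmf.prob (iid_bernoulli p) {Z. P (Z \<circ> h)}
       = measure_pmf.prob (iid_bernoulli p) {X. P X}"
  using map_pmf_comp_inj_iid_bernoulli[OF assms, of p]
  by (metis measure_map_pmf vimage_Collect_eq)

lemma iid_bernoulli_resample:
  fixes u :: "'a::finite"
  shows "iid_bernoulli p
       = iid_bernoulli p \<bind> (\<lambda>Z. map_pmf (\<lambda>a. Z(u := a)) (bernoulli_pmf p))"
proof -
  let ?B = "bernoulli_pmf p"
  have "insert u (- {u}) = UNIV"
    by auto
  then have "iid_bernoulli p = Pi_pmf (insert u (- {u})) False (\<lambda>_. ?B)"
    by (simp add: iid_bernoulli_def)
  also have "\<dots>
      = map_pmf (\<lambda>(a, Z). Z(u := a)) (pair_pmf ?B (Pi_pmf (- {u}) False (\<lambda>_. ?B)))"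
    by (rule Pi_pmf_insert) auto
  also have "Pi_pmf (- {u}) False (\<lambda>_. ?B) = map_pmf (\<lambda>Z. Z(u := False)) (iid_bernoulli p)"
    using Pi_pmf_remove[where A = UNIV and x = u and dflt = False and p = "\<lambda>_. ?B"]
    by (simp add: iid_bernoulli_def Compl_eq_Diff_UNIV)
  also have "map_pmf (\<lambda>(a, Z). Z(u := a))
        (pair_pmf ?B (map_pmf (\<lambda>Z. Z(u := False)) (iid_bernoulli p)))
      = map_pmf (\<lambda>(a, Z). Z(u := a)) (pair_pmf ?B (iid_bernoulli p))"
    by (simp add: pair_map_pmf2 pmf.map_comp case_prod_beta' comp_def)
  also have "\<dots> = iid_bernoulli p \<bind> (\<lambda>Z. map_pmf (\<lambda>a. Z(u := a)) ?B)"
    unfolding pair_pmf_def map_bind_pmf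
    by (subst bind_commute_pmf) (simp add: map_pmf_def bind_return_pmf)
  finally show ?thesis .
qed

lemma expectation_iid_bernoulli_resample:
  fixes h :: "('a::finite \<Rightarrow> bool) \<Rightarrow> real"
  assumes "0 \<le> p" "p \<le> 1"
  shows "measure_pmf.expectation (iid_bernoulli p) h
       = measure_pmf.expectation (iid_bernoulli p)
           (\<lambda>Z. p * h (Z(u := True)) + (1 - p) * h (Z(u := False)))"
proof -
  have "measure_pmf.expectation (iid_bernoulli p) h
      = (\<Sum>Z\<in>UNIV. pmf (iid_bernoulli p) Z *\<^sub>R
           measure_pmf.expectation (map_pmf (\<lambda>a. Z(u := a)) (bernoulli_pmf p)) h)"
    by (subst iid_bernoulli_resample[of p u], rule pmf_expectation_bind) auto
  also have "\<dots> = measure_pmf.expectation (iid_bernoulli p)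
      (\<lambda>Z. p * h (Z(u := True)) + (1 - p) * h (Z(u := False)))"
    using assms by (subst integral_measure_pmf[of UNIV]) (auto simp: algebra_simps)
  finally show ?thesis .
qed

lemma prob_iid_bernoulli_merge_le:
  fixes F :: "('a::finite \<Rightarrow> bool) \<Rightarrow> bool"
  assumes "submodular_in F u v" and "0 \<le> p" "p \<le> 1"
  shows "measure_pmf.prob (iid_bernoulli p) {Z. F (Z(v := Z u))}
       \<le> measure_pmf.prob (iid_bernoulli p) {Z. F Z}"
proof -
  define f where "f a b Z = (of_bool (F (Z(u := a, v := b))) :: real)" for a b Z
  have prob_eq:
    "measure_pmf.prob M {Z. P Z} = measure_pmf.expectation M (\<lambda>Z. of_bool (P Z))"
    for M :: "('a \<Rightarrow> bool) pmf" and P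
  proof -
    have "(\<lambda>Z. of_bool (P Z) :: real) = indicator {Z. P Z}"
      by (auto simp: indicator_def)
    then show ?thesis
      by simp
  qed
  have "measure_pmf.prob (iid_bernoulli p) {Z. F (Z(v := Z u))}
      = measure_pmf.expectation (iid_bernoulli p)
          (\<lambda>Z. p * f True True Z + (1 - p) * f False False Z)"
    unfolding prob_eq f_def
    by (subst expectation_iid_bernoulli_resample[OF assms(2,3), where u = u]) simp
  also have "\<dots> \<le> measure_pmf.expectation (iid_bernoulli p) (\<lambda>Z.
      p * (p * f True True Z + (1 - p) * f True False Z)
      + (1 - p) * (p * f False True Z + (1 - p) * f False False Z))"
  proof (rule integral_mono)
    fix Z
    have "f True True Z + f False False Z \<le> f True False Z + f False True Z"
      using assms(1) by (simp add: submodular_in_def f_def)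
    then have "0 \<le> p * (1 - p) *
        (f True False Z + f False True Z - f True True Z - f False False Z)"
      using assms(2,3) by simp
    then show "p * f True True Z + (1 - p) * f False False Z \<le>
      p * (p * f True True Z + (1 - p) * f True False Z)
      + (1 - p) * (p * f False True Z + (1 - p) * f False False Z)"
      by (simp add: algebra_simps)
  qed (simp_all add: integrable_measure_pmf_finite)
  also have "\<dots> = measure_pmf.prob (iid_bernoulli p) {Z. F Z}"
    unfolding prob_eq f_def
    by (subst (2) expectation_iid_bernoulli_resample[OF assms(2,3), where u = v],
        subst (2) expectation_iid_bernoulli_resample[OF assms(2,3), where u = u]) simp
  finally show ?thesis .
qed

lemma prob_iid_bernoulli_comp_le_if_inj_on_minimal_one_sets:
  fixes L :: "('s::finite \<Rightarrow> bool) \<Rightarrow> bool" and \<psi> :: "'s \<Rightarrow> 't::finite"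
  assumes "mono L" "0 \<le> p" "p \<le> 1"
    and inj: "\<And>A. minimal_one_set L A \<Longrightarrow> inj_on \<psi> A"
  shows "measure_pmf.prob (iid_bernoulli p) {Y :: 't \<Rightarrow> bool. L (Y \<circ> \<psi>)}
       \<le> measure_pmf.prob (iid_bernoulli p) {X. L X}"
proof -
  define \<phi> :: "'s set \<Rightarrow> 's \<Rightarrow> 's + 't"
    where "\<phi> D k = (if k \<in> D then Inr (\<psi> k) else Inl k)" for D k
  define Q
    where "Q D = measure_pmf.prob (iid_bernoulli p) {Z :: 's + 't \<Rightarrow> bool. L (Z \<circ> \<phi> D)}"
    for D
  have step: "Q (insert x D) \<le> Q D" if "x \<notin> D" for x D
  proof -
    have "submodular_in (\<lambda>Z. L (Z \<circ> \<phi> D)) (Inr (\<psi> x)) (Inl x)"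
    proof (rule submodular_in_comp_if_minimal_one_sets_avoid[OF assms(1)])
      fix A
      assume "minimal_one_set L A"
      then have "inj_on \<psi> A"
        by (rule inj)
      then show "Inr (\<psi> x) \<notin> \<phi> D ` A \<or> Inl x \<notin> \<phi> D ` A"
        using \<open>x \<notin> D\<close> by (auto simp: \<phi>_def inj_on_def split: if_splits)
    qed simp
    moreover have "Z \<circ> \<phi> (insert x D) = Z(Inl x := Z (Inr (\<psi> x))) \<circ> \<phi> D"
      for Z :: "'s + 't \<Rightarrow> bool"
      using \<open>x \<notin> D\<close> by (auto simp: \<phi>_def fun_eq_iff)
    ultimately show ?thesis
      unfolding Q_def using prob_iid_bernoulli_merge_le assms(2,3) by simp
  qed
  have "Q D \<le> Q {}" for D
    using finite[of D]
  proof (induction D rule: finite_induct)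
    case (insert x D)
    then show ?case
      using step[of x D] by linarith
  qed simp
  moreover have "Q {} = measure_pmf.prob (iid_bernoulli p) {X. L X}"
  proof -
    have "\<phi> {} = Inl"
      by (auto simp: \<phi>_def)
    then show ?thesis
      unfolding Q_def by (simp add: prob_iid_bernoulli_comp_inj)
  qed
  moreover have "Q UNIV = measure_pmf.prob (iid_bernoulli p) {Y :: 't \<Rightarrow> bool. L (Y \<circ> \<psi>)}"
  proof -
    have "Z \<circ> \<phi> UNIV = (Z \<circ> Inr) \<circ> \<psi>" for Z :: "'s + 't \<Rightarrow> bool"
      by (auto simp: \<phi>_def)
    then show ?thesis
      unfolding Q_def
      using prob_iid_bernoulli_comp_inj[where P = "\<lambda>Y. L (Y \<circ> \<psi>)" and h = Inr] by simp
  qed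
  ultimately show ?thesis
    by metis
qed

theorem proposition5:
  fixes L :: "('s::finite \<Rightarrow> bool) \<Rightarrow> bool"
    and \<psi> :: "'s \<Rightarrow> 't::finite"
    and p :: real
  assumes "mono L"
    and "0 \<le> p" and "p \<le> 1"
  shows "((\<forall>A. minimal_one_set L A \<longrightarrow> card (\<psi> ` A) = card A) \<longrightarrow>
           measure_pmf.prob (iid_bernoulli p) {Y :: 't \<Rightarrow> bool. L (Y \<circ> \<psi>)}
             \<le> measure_pmf.prob (iid_bernoulli p) {X :: 's \<Rightarrow> bool. L X})
       \<and> ((\<forall>Z. minimal_zero_set L Z \<longrightarrow> card (\<psi> ` Z) = card Z) \<longrightarrow>
           measure_pmf.prob (iid_bernoulli p) {Y :: 't \<Rightarrow> bool. L (Y \<circ> \<psi>)}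
             \<ge> measure_pmf.prob (iid_bernoulli p) {X :: 's \<Rightarrow> bool. L X})"
proof (intro conjI impI)
  assume "\<forall>A. minimal_one_set L A \<longrightarrow> card (\<psi> ` A) = card A"
  then show "measure_pmf.prob (iid_bernoulli p) {Y :: 't \<Rightarrow> bool. L (Y \<circ> \<psi>)}
      \<le> measure_pmf.prob (iid_bernoulli p) {X. L X}"
    using assms by (intro prob_iid_bernoulli_comp_le_if_inj_on_minimal_one_sets)
      (auto intro: eq_card_imp_inj_on)
next
  assume "\<forall>Z. minimal_zero_set L Z \<longrightarrow> card (\<psi> ` Z) = card Z"
  then have "measure_pmf.prob (iid_bernoulli (1 - p))
        {Y :: 't \<Rightarrow> bool. boolean_dual L (Y \<circ> \<psi>)}
      \<le> measure_pmf.prob (iid_bernoulli (1 - p)) {X. boolean_dual L X}"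
    using assms
    by (intro prob_iid_bernoulli_comp_le_if_inj_on_minimal_one_sets mono_boolean_dual)
      (auto simp flip: minimal_zero_set_iff_minimal_one_set_boolean_dual
        intro: eq_card_imp_inj_on)
  then show "measure_pmf.prob (iid_bernoulli p) {Y :: 't \<Rightarrow> bool. L (Y \<circ> \<psi>)}
      \<ge> measure_pmf.prob (iid_bernoulli p) {X. L X}"
    using prob_iid_bernoulli_flip[OF assms(2,3), of L]
      prob_iid_bernoulli_flip[OF assms(2,3), of "\<lambda>Y. L (Y \<circ> \<psi>)"]
    by (simp add: boolean_dual_def comp_assoc)
qed

end
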